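(* Let $d\ge 1$ be an integer and $\kappa>0$. Define $g:[0,\infty)\to\mathbb{R}$ by $$g(\eta)=\frac{\eta}{\kappa}\int_0^\pi \exp(\eta\cos\theta)\sin^{d-1}\theta\,d\theta-\int_0^\pi \cos\theta\,\exp(\eta\cos\theta)\sin^{d-1}\theta\,d\theta .$$ Then: (1) If $0<\kappa\le d+1$, then $g(\eta)=0$ if and only if $\eta=0$. (2) If $\kappa>d+1$, then the equation $g(\eta)=0$ has exactly two solutions in $[0,\infty)$: $\eta_1=0$ and some $\eta_2\in(0,\kappa)$. *)

theory Defs
  imports "HOL-Analysis.Analysis"
begin

definition g_fun :: "nat \<Rightarrow> real \<Rightarrow> real \<Rightarrow> real" where
  "g_fun d \<kappa> \<eta> =
     \<eta> / \<kappa> * integral {0..pi} (\<lambda>\<theta>. exp (\<eta> * cos \<theta>) * sin \<theta> ^ (d - 1))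
     - integral {0..pi} (\<lambda>\<theta>. cos \<theta> * exp (\<eta> * cos \<theta>) * sin \<theta> ^ (d - 1))"

end

theory Submission
  imports Defs
begin

text \<open>
  Write \<open>P(k,m)\<close> for the moment \<open>cos_moment k m \<eta>\<close>, so that
  \<open>g = \<eta>/\<kappa> P(0,m) - P(1,m)\<close> with \<open>m = d - 1\<close>, and the \<open>\<eta>\<close>-derivative of \<open>P(k,m)\<close> is
  \<open>P(k+1,m)\<close>. Integrating by parts against \<open>sin\<^sup>m\<^sup>+\<^sup>1\<close> gives the recurrence
  \<open>(m+1) P(k+1,m) = k P(k-1,m+2) + \<eta> P(k,m+2)\<close>; hence the odd moments are positive for
  \<open>\<eta> > 0\<close>, and \<open>(m+1) P(1,m) = \<eta> (P(0,m) - P(2,m))\<close>.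

  Two monotonicity arguments do the rest (all moments with second index \<open>m\<close>). Since
  \<open>P(1) - \<eta> P(2)\<close> vanishes at 0 and has derivative \<open>-\<eta> P(3) < 0\<close>, we get
  \<open>(d+1) P(1) < \<eta> P(0)\<close>, which is part (1). Since \<open>\<eta>\<^sup>m\<^sup>+\<^sup>1 (\<eta> P(0)\<^sup>2 - (m+2) P(0) P(1) - \<eta> P(1)\<^sup>2)\<close>
  vanishes at 0 and has derivative \<open>-2 \<eta>\<^sup>m\<^sup>+\<^sup>2 P(1)\<^sup>2 < 0\<close>, the ratio \<open>P(1) / (\<eta> P(0))\<close>,
  whose level set at \<open>1/\<kappa>\<close> is the set of positive zeros of \<open>g\<close>, is strictly decreasing.
  For \<open>\<kappa> > d+1\<close> a positive zero below \<open>\<kappa>\<close> exists by the intermediate value theorem: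
  \<open>g'(0) = P(0) (1/\<kappa> - 1/(d+1)) < 0\<close> while \<open>g(\<kappa>) = P(0) - P(1) > 0\<close>.
\<close>

definition cos_moment :: "nat \<Rightarrow> nat \<Rightarrow> real \<Rightarrow> real" where
  "cos_moment k m \<eta> = integral {0..pi} (\<lambda>t. cos t ^ k * exp (\<eta> * cos t) * sin t ^ m)"

lemma cos_moment_integrable:
  "(\<lambda>t::real. cos t ^ k * exp (\<eta> * cos t) * sin t ^ m) integrable_on {a..b}"
  by (intro integrable_continuous_interval continuous_intros)

lemma cos_moment_has_real_derivative [derivative_intros]:
  "(cos_moment k m has_real_derivative cos_moment (Suc k) m \<eta>) (at \<eta> within S)"
proof -
  have "((\<lambda>x. integral (cbox 0 pi) (\<lambda>t. cos t ^ k * exp (x * cos t) * sin t ^ m))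
      has_field_derivative
        integral (cbox 0 pi) (\<lambda>t. cos t ^ Suc k * exp (\<eta> * cos t) * sin t ^ m)) (at \<eta>)"
    by (rule leibniz_rule_field_derivative
          [where fx = "\<lambda>x t. cos t ^ Suc k * exp (x * cos t) * sin t ^ m"])
      (auto intro!: derivative_eq_intros integrable_continuous_interval continuous_intros
        simp: split_beta)
  then show ?thesis
    unfolding cos_moment_def[abs_def] by (simp add: has_field_derivative_at_within)
qed

lemma continuous_on_cos_moment: "continuous_on S (cos_moment k m)"
  by (meson DERIV_isCont continuous_at_imp_continuous_on cos_moment_has_real_derivative)

lemma integral_cos_sin_power_by_parts:
  fixes \<phi> \<phi>' :: "real \<Rightarrow> real"
  assumes \<phi>': "\<And>t. (\<phi> has_real_derivative \<phi>' t) (at t)" and cont: "continuous_on {0..pi} \<phi>'"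
  shows "real (Suc m) * integral {0..pi} (\<lambda>t. \<phi> t * cos t * sin t ^ m)
       = - integral {0..pi} (\<lambda>t. \<phi>' t * sin t ^ Suc m)"
proof -
  have cont_\<phi>: "continuous_on {0..pi} \<phi>"
    using \<phi>' by (meson DERIV_isCont continuous_at_imp_continuous_on)
  let ?F = "\<lambda>t. \<phi> t * sin t ^ Suc m"
  have "((\<lambda>t. \<phi>' t * sin t ^ Suc m + real (Suc m) * (\<phi> t * cos t * sin t ^ m))
          has_integral ?F pi - ?F 0) {0..pi}"
    by (intro fundamental_theorem_of_calculus)
      (auto simp: has_real_derivative_iff_has_vector_derivative[symmetric] algebra_simps
        simp del: power_Suc intro!: derivative_eq_intros \<phi>'[THEN has_field_derivative_at_within])
  then have "integral {0..pi}
      (\<lambda>t. \<phi>' t * sin t ^ Suc m + real (Suc m) * (\<phi> t * cos t * sin t ^ m)) = 0"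
    by (simp add: integral_unique)
  moreover have "integral {0..pi}
      (\<lambda>t. \<phi>' t * sin t ^ Suc m + real (Suc m) * (\<phi> t * cos t * sin t ^ m))
      = integral {0..pi} (\<lambda>t. \<phi>' t * sin t ^ Suc m)
        + real (Suc m) * integral {0..pi} (\<lambda>t. \<phi> t * cos t * sin t ^ m)"
    by (simp add: integral_add integrable_continuous_interval continuous_intros cont cont_\<phi>)
  ultimately show ?thesis by linarith
qed

lemma cos_moment_recurrence:
  "real (Suc m) * cos_moment (Suc k) m \<eta>
     = real k * cos_moment (k - 1) (m + 2) \<eta> + \<eta> * cos_moment k (m + 2) \<eta>"
proof -
  let ?e = "\<lambda>t. exp (\<eta> * cos t)"
  have "real (Suc m) * integral {0..pi} (\<lambda>t. (cos t ^ k * ?e t) * cos t * sin t ^ m)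
      = - integral {0..pi} (\<lambda>t. (real k * cos t ^ (k - 1) * - sin t * ?e t
                                    + cos t ^ k * (?e t * (\<eta> * - sin t))) * sin t ^ Suc m)"
    by (rule integral_cos_sin_power_by_parts) (auto intro!: derivative_eq_intros continuous_intros)
  also have "\<dots> = integral {0..pi} (\<lambda>t. real k * (cos t ^ (k - 1) * ?e t * sin t ^ (m + 2))
                                        + \<eta> * (cos t ^ k * ?e t * sin t ^ (m + 2)))"
    by (simp add: algebra_simps flip: integral_neg)
  also have "\<dots> = real k * cos_moment (k - 1) (m + 2) \<eta> + \<eta> * cos_moment k (m + 2) \<eta>"
    unfolding cos_moment_def
    by (subst integral_add) (auto intro!: integrable_continuous_interval continuous_intros)
  finally show ?thesis
    by (simp add: cos_moment_def mult_ac)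
qed

lemma cos_moment_sin_Suc_Suc:
  "cos_moment k (m + 2) \<eta> = cos_moment k m \<eta> - cos_moment (k + 2) m \<eta>"
proof -
  have "cos t ^ k * exp (\<eta> * cos t) * sin t ^ (m + 2)
      = cos t ^ k * exp (\<eta> * cos t) * sin t ^ m - cos t ^ (k + 2) * exp (\<eta> * cos t) * sin t ^ m"
    for t :: real
  proof -
    have sin_power: "sin t ^ (m + 2) = sin t ^ m * (1 - cos t ^ 2)"
      by (simp add: power_add sin_squared_eq flip: power2_eq_square)
    show ?thesis by (subst sin_power) (simp add: power_add power2_eq_square algebra_simps)
  qed
  then show ?thesis
    unfolding cos_moment_def by (simp only: integral_diff cos_moment_integrable)
qed

lemma cos_moment_0_pos: "0 < cos_moment 0 m \<eta>"
proof -
  have "integral {0..pi} (\<lambda>t. 0) < integral {0..pi} (\<lambda>t. exp (\<eta> * cos t) * sin t ^ m)"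
    by (intro integral_less_real)
      (auto intro!: continuous_intros simp: sin_gt_zero, use pi_gt_zero in linarith)
  then show ?thesis by (simp add: cos_moment_def)
qed

lemma cos_moment_even_nonneg:
  assumes "even k"
  shows "0 \<le> cos_moment k m \<eta>"
  unfolding cos_moment_def
proof (intro integral_nonneg cos_moment_integrable)
  fix t assume "t \<in> {0..pi}"
  then have "0 \<le> sin t ^ m" by (simp add: sin_ge_zero)
  with assms show "0 \<le> cos t ^ k * exp (\<eta> * cos t) * sin t ^ m"
    by (simp add: zero_le_even_power)
qed

lemma cos_moment_odd_pos:
  assumes "0 < \<eta>" and "odd k"
  shows "0 < cos_moment k m \<eta>"
proof -
  obtain j where "k = 2 * j + 1" using \<open>odd k\<close> oddE by blast
  moreover have "0 < cos_moment (2 * j + 1) m \<eta>" for m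
  proof (induction j arbitrary: m)
    case 0
    have "0 < real (Suc m) * cos_moment 1 m \<eta>"
      using cos_moment_recurrence[of m 0 \<eta>] cos_moment_0_pos[of "m + 2" \<eta>] \<open>0 < \<eta>\<close> by simp
    then show ?case by (simp add: zero_less_mult_iff)
  next
    case (Suc j)
    have "0 < real (2 * j + 2) * cos_moment (2 * j + 1) (m + 2) \<eta>"
      using Suc.IH by simp
    moreover have "0 \<le> \<eta> * cos_moment (2 * j + 2) (m + 2) \<eta>"
      using \<open>0 < \<eta>\<close> cos_moment_even_nonneg[of "2 * j + 2"] by simp
    ultimately have "0 < real (Suc m) * cos_moment (2 * Suc j + 1) m \<eta>"
      using cos_moment_recurrence[of m "2 * j + 2" \<eta>] by simp
    then show ?case by (simp add: zero_less_mult_iff)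
  qed
  ultimately show ?thesis by simp
qed

lemma cos_moment_1_less_0: "cos_moment 1 m \<eta> < cos_moment 0 m \<eta>"
proof -
  have "cos t * exp (\<eta> * cos t) * sin t ^ m < exp (\<eta> * cos t) * sin t ^ m"
    if "t \<in> {0<..<pi}" for t
  proof -
    have "cos t < 1"
      using that cos_monotone_0_pi[of 0 t] by auto
    moreover have "0 < exp (\<eta> * cos t) * sin t ^ m"
      using that by (simp add: sin_gt_zero)
    ultimately show ?thesis
      using mult_strict_right_mono by fastforce
  qed
  then show ?thesis
    unfolding cos_moment_def
    by (intro integral_less_real) (auto intro!: continuous_intros, use pi_gt_zero in linarith)
qed

lemma cos_moment_1_at_0: "cos_moment 1 m 0 = 0"
  using cos_moment_recurrence[of m 0 0] by simp

lemma cos_moment_2_at_0: "real (m + 2) * cos_moment 2 m 0 = cos_moment 0 m 0"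
  using cos_moment_recurrence[of m 1 0] cos_moment_sin_Suc_Suc[of 0 m 0]
  by (simp add: algebra_simps numeral_2_eq_2)

lemma cos_moment_1_eq:
  "real (Suc m) * cos_moment 1 m \<eta> = \<eta> * (cos_moment 0 m \<eta> - cos_moment 2 m \<eta>)"
  using cos_moment_recurrence[of m 0 \<eta>] cos_moment_sin_Suc_Suc[of 0 m \<eta>]
  by (simp add: numeral_2_eq_2)

lemma cos_moment_1_bound:
  assumes "0 < \<eta>"
  shows "real (m + 2) * cos_moment 1 m \<eta> < \<eta> * cos_moment 0 m \<eta>"
proof -
  define h where "h x = cos_moment 1 m x - x * cos_moment 2 m x" for x
  have "h \<eta> < h 0"
  proof (rule DERIV_neg_imp_decreasing_open[OF assms])
    fix x :: real assume "0 < x"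
    have "DERIV h x :> - x * cos_moment 3 m x"
      unfolding h_def by (auto intro!: derivative_eq_intros simp: numeral_3_eq_3 numeral_2_eq_2)
    moreover have "- x * cos_moment 3 m x < 0"
      using \<open>0 < x\<close> cos_moment_odd_pos[OF \<open>0 < x\<close>, of 3] by simp
    ultimately show "\<exists>y. DERIV h x :> y \<and> y < 0" by blast
  qed (auto simp: h_def intro!: continuous_intros continuous_on_cos_moment)
  then have "cos_moment 1 m \<eta> < \<eta> * cos_moment 2 m \<eta>"
    using cos_moment_1_at_0[of m] by (simp add: h_def)
  then show ?thesis
    using cos_moment_1_eq[of m \<eta>] by (simp add: algebra_simps)
qed

lemma cos_moment_Turan_inequality:
  assumes "0 < \<eta>"
  shows "\<eta> * cos_moment 0 m \<eta> ^ 2 < real (m + 2) * cos_moment 0 m \<eta> * cos_moment 1 m \<eta>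
           + \<eta> * cos_moment 1 m \<eta> ^ 2"
proof -
  define w where
    "w x = x * cos_moment 0 m x ^ 2 - real (m + 2) * cos_moment 0 m x * cos_moment 1 m x
             - x * cos_moment 1 m x ^ 2" for x
  define W where "W x = x ^ Suc m * w x" for x
  have "W \<eta> < W 0"
  proof (rule DERIV_neg_imp_decreasing_open[OF assms])
    fix x :: real assume "0 < x"
    let ?a = "cos_moment 0 m x" and ?b = "cos_moment 1 m x" and ?c = "cos_moment 2 m x"
    let ?w' = "?a ^ 2 + 2 * x * ?a * ?b - real (m + 2) * (?b * ?b + ?a * ?c)
               - ?b ^ 2 - 2 * x * ?b * ?c"
    have "DERIV w x :> ?w'"
      unfolding w_def[abs_def]
      by (auto intro!: derivative_eq_intros simp: numeral_2_eq_2 algebra_simps power2_eq_square)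
    from DERIV_mult[OF DERIV_pow[of "Suc m" x] this]
    have dW: "DERIV W x :> x ^ m * (real (Suc m) * w x + x * ?w')"
      unfolding W_def[abs_def] by (simp add: algebra_simps)
    have "real (Suc m) * w x + x * ?w' + 2 * x * ?b ^ 2
        = (- real (m + 2) * ?a - 2 * x * ?b) * (x * ?c - (x * ?a - real (Suc m) * ?b))"
      by (simp add: w_def algebra_simps power2_eq_square)
    also have "\<dots> = 0"
      using cos_moment_1_eq[of m x] by (simp add: algebra_simps)
    finally have "real (Suc m) * w x + x * ?w' = - 2 * x * ?b ^ 2"
      by linarith
    with dW have "DERIV W x :> x ^ m * (- 2 * x * ?b ^ 2)"
      by simp
    moreover have "x ^ m * (- 2 * x * ?b ^ 2) < 0"
      using \<open>0 < x\<close> cos_moment_odd_pos[OF \<open>0 < x\<close>, of 1 m] by (simp add: mult_pos_neg)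
    ultimately show "\<exists>y. DERIV W x :> y \<and> y < 0" by blast
  qed (auto simp: W_def w_def intro!: continuous_intros continuous_on_cos_moment)
  then have "\<eta> ^ Suc m * w \<eta> < 0"
    by (simp add: W_def)
  then have "w \<eta> < 0"
    using assms by (simp add: mult_less_0_iff)
  then show ?thesis
    by (simp add: w_def)
qed

definition cos_moment_ratio :: "nat \<Rightarrow> real \<Rightarrow> real" where
  "cos_moment_ratio m \<eta> = cos_moment 1 m \<eta> / (\<eta> * cos_moment 0 m \<eta>)"

lemma cos_moment_ratio_strict_antimono: "strict_antimono_on {0<..} (cos_moment_ratio m)"
proof (rule monotone_onI)
  fix a b :: real assume "a \<in> {0<..}" "a < b"
  have "\<exists>y. DERIV (cos_moment_ratio m) x :> y \<and> y < 0" if "a \<le> x" for x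
  proof -
    let ?p = "cos_moment 0 m x" and ?q = "cos_moment 1 m x"
    have "0 < x" "0 < ?p"
      using \<open>a \<in> {0<..}\<close> that cos_moment_0_pos by auto
    have "DERIV (cos_moment_ratio m) x
        :> (cos_moment 2 m x * (x * ?p) - ?q * (?p + x * ?q)) / (x * ?p) ^ 2"
      unfolding cos_moment_ratio_def[abs_def] using \<open>0 < x\<close> \<open>0 < ?p\<close>
      by (auto intro!: derivative_eq_intros simp: numeral_2_eq_2 power2_eq_square algebra_simps)
    moreover have "cos_moment 2 m x * (x * ?p) - ?q * (?p + x * ?q)
        = x * ?p ^ 2 - real (m + 2) * ?p * ?q - x * ?q ^ 2"
    proof -
      have "x * cos_moment 2 m x = x * ?p - real (Suc m) * ?q"
        using cos_moment_1_eq[of m x] by (simp add: algebra_simps)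
      have "cos_moment 2 m x * (x * ?p) - ?q * (?p + x * ?q)
          = ?p * (x * cos_moment 2 m x) - ?p * ?q - x * ?q ^ 2"
        by (simp add: algebra_simps power2_eq_square)
      also have "\<dots> = x * ?p ^ 2 - real (m + 2) * ?p * ?q - x * ?q ^ 2"
        unfolding \<open>x * cos_moment 2 m x = x * ?p - real (Suc m) * ?q\<close>
        by (simp add: algebra_simps power2_eq_square)
      finally show ?thesis .
    qed
    moreover have "x * ?p ^ 2 - real (m + 2) * ?p * ?q - x * ?q ^ 2 < 0"
      using cos_moment_Turan_inequality[OF \<open>0 < x\<close>, of m] by simp
    ultimately show ?thesis
      using \<open>0 < x\<close> \<open>0 < ?p\<close> by (auto intro!: divide_neg_pos)
  qed
  then show "cos_moment_ratio m b < cos_moment_ratio m a"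
    using DERIV_neg_imp_decreasing[OF \<open>a < b\<close>] by blast
qed

lemma g_fun_eq_cos_moment:
  "g_fun d \<kappa> \<eta> = \<eta> / \<kappa> * cos_moment 0 (d - 1) \<eta> - cos_moment 1 (d - 1) \<eta>"
  by (simp add: g_fun_def cos_moment_def)

lemma g_fun_at_0: "g_fun d \<kappa> 0 = 0"
  using cos_moment_1_at_0 by (simp add: g_fun_eq_cos_moment)

lemma g_fun_eq_0_iff_cos_moment_ratio:
  assumes "0 < \<kappa>" and "0 < \<eta>"
  shows "g_fun d \<kappa> \<eta> = 0 \<longleftrightarrow> cos_moment_ratio (d - 1) \<eta> = 1 / \<kappa>"
  using assms cos_moment_0_pos[of "d - 1" \<eta>]
  by (auto simp: g_fun_eq_cos_moment cos_moment_ratio_def field_simps)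

lemma g_fun_pos_root_unique:
  assumes "0 < \<kappa>" and "0 < x" "0 < y" and "g_fun d \<kappa> x = 0" "g_fun d \<kappa> y = 0"
  shows "x = y"
  using cos_moment_ratio_strict_antimono[of "d - 1", THEN strict_antimono_iff_antimono[THEN iffD1]]
    assms g_fun_eq_0_iff_cos_moment_ratio[OF \<open>0 < \<kappa>\<close>]
  by (auto simp: inj_on_def)

lemma g_fun_pos:
  assumes "1 \<le> d" and "0 < \<kappa>" "\<kappa> \<le> real d + 1" and "0 < \<eta>"
  shows "0 < g_fun d \<kappa> \<eta>"
proof -
  let ?m = "d - 1"
  have "real (?m + 2) = real d + 1"
    using \<open>1 \<le> d\<close> by simp
  then have "cos_moment 1 ?m \<eta> < \<eta> * cos_moment 0 ?m \<eta> / (real d + 1)"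
    using cos_moment_1_bound[OF \<open>0 < \<eta>\<close>, of ?m] by (simp add: field_simps)
  also have "\<dots> \<le> \<eta> / \<kappa> * cos_moment 0 ?m \<eta>"
    using assms cos_moment_0_pos[of ?m \<eta>] by (simp add: divide_left_mono)
  finally show ?thesis
    by (simp add: g_fun_eq_cos_moment)
qed

lemma g_fun_has_real_derivative:
  assumes "0 < \<kappa>"
  shows "(g_fun d \<kappa> has_real_derivative
          (cos_moment 0 (d - 1) x + x * cos_moment 1 (d - 1) x) / \<kappa> - cos_moment 2 (d - 1) x) (at x)"
proof -
  have "g_fun d \<kappa> = (\<lambda>\<eta>. \<eta> / \<kappa> * cos_moment 0 (d - 1) \<eta> - cos_moment 1 (d - 1) \<eta>)"
    by (simp add: g_fun_eq_cos_moment fun_eq_iff)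
  then show ?thesis
    using assms by (auto intro!: derivative_eq_intros simp: numeral_2_eq_2 field_simps)
qed

lemma g_fun_neg_near_0:
  assumes "1 \<le> d" and "real d + 1 < \<kappa>"
  shows "\<exists>h. 0 < h \<and> h < \<kappa> \<and> g_fun d \<kappa> h < 0"
proof -
  let ?m = "d - 1"
  have "0 < \<kappa>" and m: "real (?m + 2) = real d + 1"
    using assms by auto
  have "real (?m + 2) * cos_moment 0 ?m 0 < \<kappa> * cos_moment 0 ?m 0"
    using assms m cos_moment_0_pos[of ?m 0] by (intro mult_strict_right_mono) auto
  then have "cos_moment 0 ?m 0 / \<kappa> < cos_moment 0 ?m 0 / real (?m + 2)"
    using \<open>0 < \<kappa>\<close> by (simp add: field_simps)
  moreover have "cos_moment 2 ?m 0 = cos_moment 0 ?m 0 / real (?m + 2)"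
    using cos_moment_2_at_0[of ?m] by (simp add: eq_divide_eq mult.commute)
  ultimately have "(cos_moment 0 ?m 0 + 0 * cos_moment 1 ?m 0) / \<kappa> - cos_moment 2 ?m 0 < 0"
    by simp
  from DERIV_neg_dec_right[OF g_fun_has_real_derivative[OF \<open>0 < \<kappa>\<close>] this]
  obtain \<delta> where "0 < \<delta>"
    and \<delta>: "\<And>h. 0 < h \<Longrightarrow> h < \<delta> \<Longrightarrow> g_fun d \<kappa> (0 + h) < g_fun d \<kappa> 0"
    by blast
  define h where "h = min (\<delta> / 2) (\<kappa> / 2)"
  have "0 < h" "h < \<kappa>" "h < \<delta>"
    using \<open>0 < \<delta>\<close> \<open>0 < \<kappa>\<close> by (auto simp: h_def)
  with \<delta>[of h] g_fun_at_0 show ?thesis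
    by auto
qed

lemma g_fun_pos_root_exists:
  assumes "1 \<le> d" and "real d + 1 < \<kappa>"
  shows "\<exists>\<eta>. 0 < \<eta> \<and> \<eta> < \<kappa> \<and> g_fun d \<kappa> \<eta> = 0"
proof -
  have "0 < \<kappa>"
    using assms by simp
  obtain h where "0 < h" "h < \<kappa>" "g_fun d \<kappa> h < 0"
    using g_fun_neg_near_0[OF assms] by blast
  moreover have "0 < g_fun d \<kappa> \<kappa>"
    using \<open>0 < \<kappa>\<close> cos_moment_1_less_0 by (simp add: g_fun_eq_cos_moment)
  moreover have "continuous_on {h..\<kappa>} (g_fun d \<kappa>)"
    using g_fun_has_real_derivative[OF \<open>0 < \<kappa>\<close>]
    by (meson DERIV_isCont continuous_at_imp_continuous_on)
  ultimately obtain \<eta> where "h \<le> \<eta>" "\<eta> \<le> \<kappa>" "g_fun d \<kappa> \<eta> = 0"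
    using IVT'[of "g_fun d \<kappa>" h 0 \<kappa>] by auto
  moreover have "\<eta> \<noteq> \<kappa>"
    using \<open>g_fun d \<kappa> \<eta> = 0\<close> \<open>0 < g_fun d \<kappa> \<kappa>\<close> by auto
  ultimately show ?thesis
    using \<open>0 < h\<close> by (intro exI[of _ \<eta>]) auto
qed

theorem proposition2p1:
  fixes d :: nat and \<kappa> :: real
  assumes "d \<ge> 1" and "\<kappa> > 0"
  shows "(\<kappa> \<le> real d + 1 \<longrightarrow>
            (\<forall>\<eta>\<ge>0. g_fun d \<kappa> \<eta> = 0 \<longleftrightarrow> \<eta> = 0))
       \<and> (\<kappa> > real d + 1 \<longrightarrow>
            (\<exists>\<eta>2. 0 < \<eta>2 \<and> \<eta>2 < \<kappa> \<and>
                 {\<eta>. \<eta> \<ge> 0 \<and> g_fun d \<kappa> \<eta> = 0} = {0, \<eta>2}))"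
proof (intro conjI impI allI)
  fix \<eta> :: real
  assume "\<kappa> \<le> real d + 1" and "0 \<le> \<eta>"
  then show "g_fun d \<kappa> \<eta> = 0 \<longleftrightarrow> \<eta> = 0"
    using g_fun_pos[OF assms \<open>\<kappa> \<le> real d + 1\<close>, of \<eta>] g_fun_at_0[of d \<kappa>]
    by (cases "\<eta> = 0") auto
next
  assume "real d + 1 < \<kappa>"
  then obtain \<eta>2 where \<eta>2: "0 < \<eta>2" "\<eta>2 < \<kappa>" "g_fun d \<kappa> \<eta>2 = 0"
    using g_fun_pos_root_exists \<open>d \<ge> 1\<close> by blast
  have "x = 0 \<or> x = \<eta>2" if "0 \<le> x" "g_fun d \<kappa> x = 0" for x
    using that g_fun_pos_root_unique[OF \<open>\<kappa> > 0\<close> _ \<open>0 < \<eta>2\<close> _ \<eta>2(3)] by (cases "x = 0") auto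
  then have "{\<eta>. \<eta> \<ge> 0 \<and> g_fun d \<kappa> \<eta> = 0} = {0, \<eta>2}"
    using \<eta>2 g_fun_at_0[of d \<kappa>] by auto
  with \<eta>2 show "\<exists>\<eta>2. 0 < \<eta>2 \<and> \<eta>2 < \<kappa> \<and> {\<eta>. \<eta> \<ge> 0 \<and> g_fun d \<kappa> \<eta> = 0} = {0, \<eta>2}"
    by blast
qed

end
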